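(* Let $r$ be a real number with $0<|r|<1$. Define $f_r(x):=\sum_{n=1}^\infty r^n\varphi^{(n)}(x)$ and $f_{r,N}(x):=\sum_{n=1}^{N-1}r^n\varphi^{(n)}(x)$ for $x\in[0,1]$, $N=1,2,\dots$. Then: (i) there is a nondegenerate random variable (i.e. a nonconstant Borel measurable function) $L_r$ on $[0,1]$ with $\int_0^1 L_r(x)\,dx=1$ such that $$\frac{f_r(x)-f_{r,N}(x)}{\frac12\sum_{n=N}^\infty r^n}\to L_r(x)\quad\text{in distribution as } N\to\infty$$ (with respect to Lebesgue measure on $[0,1]$); (ii) $$\lim_{N'\to\infty}\frac1{N'}\sum_{N=1}^{N'}\frac{f_r(x)-f_{r,N}(x)}{\frac12\sum_{n=N}^\infty r^n}=1$$ for Lebesgue-a.e. $x\in[0,1]$ and in $L^1([0,1])$.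
   Context: The tent map on $[0,1]$ is $\varphi(x)=2x$ for $x\in[0,1/2]$ and $\varphi(x)=2(1-x)$ for $x\in[1/2,1]$; it is extended to $\mathbb{R}$ by $\varphi(x):=\varphi(x-[x])$, and $\varphi^{(n)}$ denotes the $n$-fold iterate of $\varphi$, so that $\varphi^{(n)}(x)=\varphi(2^{n-1}x)$. *)

theory Defs
  imports "HOL-Probability.Probability"
begin

definition tent01 :: "real \<Rightarrow> real" where
  "tent01 x = (if x \<le> 1/2 then 2 * x else 2 * (1 - x))"

definition tent :: "real \<Rightarrow> real" where
  "tent x = tent01 (x - of_int \<lfloor>x\<rfloor>)"

definition tent_iter :: "nat \<Rightarrow> real \<Rightarrow> real" where
  "tent_iter n = tent ^^ n"

definition f_r :: "real \<Rightarrow> real \<Rightarrow> real" where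
  "f_r r x = (\<Sum>n. r ^ (Suc n) * tent_iter (Suc n) x)"

definition f_rN :: "real \<Rightarrow> nat \<Rightarrow> real \<Rightarrow> real" where
  "f_rN r N x = (\<Sum>n\<in>{1..<N}. r ^ n * tent_iter n x)"

definition remq :: "real \<Rightarrow> nat \<Rightarrow> real \<Rightarrow> real" where
  "remq r N x = (f_r r x - f_rN r N x) / ((1/2) * (\<Sum>n. r ^ (n + N)))"

definition unit_lebesgue :: "real measure" where
  "unit_lebesgue = restrict_space lborel {0..1}"

end

theory Submission
  imports Defs "HOL-Library.Discrete_Functions"
begin

text \<open>For N >= 1 the normalised remainder is L (phi^N x), where L = 2 (1 - r) sum_k r^k phi^k.
  The tent map phi preserves Lebesgue measure on [0,1], so every remainder has the law of L,
  whose mean is 1; this gives (i) once L is shown to be nonconstant. Put V = L - 1. Then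
  V y = (1 - r) (2 y - 1) + r V (phi y), and since phi (1 - y) = phi y, the odd function 2 y - 1
  is orthogonal to every V o phi^n with n >= 1. Hence E[V (V o phi^d)] = r^d E[V^2] and
  E[V^2] = (1 - r) / (3 (1 + r)) > 0. The partial sums S_N of the V o phi^n therefore have
  second moment O(N), so S_N / N tends to 0 in L^1, and almost everywhere along N = k^2 by
  Borel--Cantelli; since S_N has bounded increments, the gaps between squares do not matter.\<close>

section \<open>Averages of sequences with geometrically decaying correlations\<close>

lemma sum_power_inj_le_geometric:
  fixes q :: real
  assumes "0 \<le> q" "q < 1" "finite A" "inj_on g A"
  shows "(\<Sum>k\<in>A. q ^ g k) \<le> 1 / (1 - q)"
proof -
  have "(\<Sum>k\<in>A. q ^ g k) = (\<Sum>j\<in>g ` A. q ^ j)"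
    by (simp add: sum.reindex[OF assms(4)])
  also have "\<dots> \<le> (\<Sum>j. q ^ j)"
    using assms by (intro sum_le_suminf) auto
  also have "\<dots> = 1 / (1 - q)"
    using assms by (simp add: suminf_geometric)
  finally show ?thesis .
qed

lemma sum_power_abs_diff_le:
  fixes q :: real
  assumes "0 \<le> q" "q < 1" "finite A"
  shows "(\<Sum>m\<in>A. q ^ (if n \<le> m then m - n else n - m)) \<le> 2 / (1 - q)"
proof -
  let ?e = "\<lambda>m. if n \<le> m then m - n else n - m"
  have "(\<Sum>m\<in>A. q ^ ?e m) = (\<Sum>m\<in>A \<inter> {n..}. q ^ (m - n)) + (\<Sum>m\<in>A - {n..}. q ^ (n - m))"
    using assms(3) by (subst sum.Int_Diff[of _ _ "{n..}"]) (auto intro!: arg_cong2[where f="(+)"] sum.cong)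
  also have "\<dots> \<le> 1 / (1 - q) + 1 / (1 - q)"
    using assms by (intro add_mono sum_power_inj_le_geometric) (auto simp: inj_on_def)
  finally show ?thesis
    by simp
qed

lemma integral_sum_sq_le_of_correlation:
  fixes Z :: "nat \<Rightarrow> 'a \<Rightarrow> real"
  assumes int: "\<And>n m. integrable M (\<lambda>x. Z n x * Z m x)"
    and corr: "\<And>n m. n \<le> m \<Longrightarrow> \<bar>\<integral>x. Z n x * Z m x \<partial>M\<bar> \<le> c * q ^ (m - n)"
    and q: "0 \<le> q" "q < 1" and A: "finite A"
  shows "(\<integral>x. (\<Sum>n\<in>A. Z n x)\<^sup>2 \<partial>M) \<le> 2 * c / (1 - q) * card A"
proof -
  have c: "0 \<le> c"
    using order_trans[OF abs_ge_zero corr[of 0 0]] by simp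
  have corr': "\<bar>\<integral>x. Z n x * Z m x \<partial>M\<bar> \<le> c * q ^ (if n \<le> m then m - n else n - m)" for n m
    using corr[of n m] corr[of m n] by (auto simp: mult.commute)
  have "(\<integral>x. (\<Sum>n\<in>A. Z n x)\<^sup>2 \<partial>M) = (\<Sum>n\<in>A. \<Sum>m\<in>A. \<integral>x. Z n x * Z m x \<partial>M)"
    unfolding power2_eq_square sum_product
    by (simp add: Bochner_Integration.integral_sum Bochner_Integration.integrable_sum int)
  also have "\<dots> \<le> (\<Sum>n\<in>A. c * (\<Sum>m\<in>A. q ^ (if n \<le> m then m - n else n - m)))"
    unfolding sum_distrib_left by (intro sum_mono order_trans[OF abs_ge_self corr'])
  also have "\<dots> \<le> (\<Sum>n\<in>A. c * (2 / (1 - q)))"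
    using c q A by (intro sum_mono mult_left_mono sum_power_abs_diff_le) auto
  finally show ?thesis
    by (simp add: mult_ac)
qed

lemma (in prob_space) integral_abs_le_sqrt_integral_sq:
  fixes f :: "'a \<Rightarrow> real"
  assumes "integrable M f" "integrable M (\<lambda>x. (f x)\<^sup>2)"
  shows "(\<integral>x. \<bar>f x\<bar> \<partial>M) \<le> sqrt (\<integral>x. (f x)\<^sup>2 \<partial>M)"
proof (rule real_le_rsqrt)
  show "(\<integral>x. \<bar>f x\<bar> \<partial>M)\<^sup>2 \<le> (\<integral>x. (f x)\<^sup>2 \<partial>M)"
    using variance_positive[of "\<lambda>x. \<bar>f x\<bar>"] variance_eq[of "\<lambda>x. \<bar>f x\<bar>"] assms by simp
qed

lemma (in finite_measure) integrable_sum_bounded: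
  fixes Z :: "nat \<Rightarrow> 'a \<Rightarrow> real"
  assumes meas: "\<And>n. Z n \<in> borel_measurable M"
    and bound: "\<And>n x. x \<in> space M \<Longrightarrow> \<bar>Z n x\<bar> \<le> B"
  shows "integrable M (\<lambda>x. \<Sum>n\<in>A. Z n x)" "integrable M (\<lambda>x. (\<Sum>n\<in>A. Z n x)\<^sup>2)"
proof -
  have [measurable]: "(\<lambda>x. \<Sum>n\<in>A. Z n x) \<in> borel_measurable M"
    using meas by measurable
  have le: "\<bar>\<Sum>n\<in>A. Z n x\<bar> \<le> card A * B" if "x \<in> space M" for x
    using bound[OF that] by (intro order_trans[OF sum_abs] order_trans[OF sum_bounded_above[where K=B]]) auto
  then show "integrable M (\<lambda>x. \<Sum>n\<in>A. Z n x)"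
    by (intro integrable_const_bound[where B="card A * B"] AE_I2) auto
  have "(\<Sum>n\<in>A. Z n x)\<^sup>2 \<le> (card A * B)\<^sup>2" if "x \<in> space M" for x
    using power_mono[OF le[OF that], of 2] by simp
  then show "integrable M (\<lambda>x. (\<Sum>n\<in>A. Z n x)\<^sup>2)"
    by (intro integrable_const_bound[where B="(card A * B)\<^sup>2"] AE_I2) auto
qed

lemma integral_average_sq_le:
  fixes S :: "'a \<Rightarrow> real"
  assumes "(\<integral>x. (S x)\<^sup>2 \<partial>M) \<le> C * real N"
  shows "(\<integral>x. (S x / real N)\<^sup>2 \<partial>M) \<le> C / real N"
proof -
  have "(\<integral>x. (S x / real N)\<^sup>2 \<partial>M) = (\<integral>x. (S x)\<^sup>2 \<partial>M) / (real N)\<^sup>2"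
    by (simp add: power_divide)
  also have "\<dots> \<le> C * real N / (real N)\<^sup>2"
    using assms by (rule divide_right_mono) simp
  also have "\<dots> = C / real N"
    by (cases "N = 0") (simp_all add: power2_eq_square)
  finally show ?thesis .
qed

lemma (in prob_space) averages_tendsto_zero_L1:
  fixes Z :: "nat \<Rightarrow> 'a \<Rightarrow> real"
  assumes meas: "\<And>n. Z n \<in> borel_measurable M"
    and bound: "\<And>n x. x \<in> space M \<Longrightarrow> \<bar>Z n x\<bar> \<le> B"
    and sq: "\<And>N. (\<integral>x. (\<Sum>n\<in>{1..N}. Z n x)\<^sup>2 \<partial>M) \<le> C * real N"
  shows "(\<lambda>N. \<integral>x. \<bar>(\<Sum>n\<in>{1..N}. Z n x) / real N\<bar> \<partial>M) \<longlonglongrightarrow> 0"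
proof (rule Lim_null_comparison)
  show "(\<lambda>N. sqrt (C / real N)) \<longlonglongrightarrow> 0"
    using tendsto_real_sqrt[OF lim_const_over_n[of C]] by simp
  show "\<forall>\<^sub>F N in sequentially. norm (\<integral>x. \<bar>(\<Sum>n\<in>{1..N}. Z n x) / real N\<bar> \<partial>M) \<le> sqrt (C / real N)"
  proof (intro always_eventually allI)
    fix N :: nat
    define S where "S x = (\<Sum>n\<in>{1..N}. Z n x)" for x
    have "integrable M S" "integrable M (\<lambda>x. (S x)\<^sup>2)"
      unfolding S_def using integrable_sum_bounded[OF meas bound] by auto
    then have "(\<integral>x. \<bar>S x / real N\<bar> \<partial>M) \<le> sqrt (\<integral>x. (S x / real N)\<^sup>2 \<partial>M)"
      by (intro integral_abs_le_sqrt_integral_sq) (auto simp: power_divide)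
    also have "\<dots> \<le> sqrt (C / real N)"
      using sq[of N] unfolding S_def by (intro real_sqrt_le_mono integral_average_sq_le)
    finally show "norm (\<integral>x. \<bar>(\<Sum>n\<in>{1..N}. Z n x) / real N\<bar> \<partial>M) \<le> sqrt (C / real N)"
      unfolding S_def by simp
  qed
qed

lemma AE_tendsto_zero_of_summable_integral:
  fixes f :: "nat \<Rightarrow> 'a \<Rightarrow> real"
  assumes int: "\<And>k. integrable M (f k)" and nonneg: "\<And>k x. x \<in> space M \<Longrightarrow> 0 \<le> f k x"
    and summable: "summable (\<lambda>k. \<integral>x. f k x \<partial>M)"
  shows "AE x in M. (\<lambda>k. f k x) \<longlonglongrightarrow> 0"
proof -
  have [measurable]: "f k \<in> borel_measurable M" for k
    using int by (rule borel_measurable_integrable)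
  have "(\<integral>\<^sup>+x. (\<Sum>k. ennreal (f k x)) \<partial>M) = (\<Sum>k. \<integral>\<^sup>+x. ennreal (f k x) \<partial>M)"
    by (rule nn_integral_suminf) measurable
  also have "\<dots> = (\<Sum>k. ennreal (\<integral>x. f k x \<partial>M))"
    using int nonneg by (subst nn_integral_eq_integral) auto
  also have "\<dots> = ennreal (\<Sum>k. \<integral>x. f k x \<partial>M)"
    using summable nonneg by (intro suminf_ennreal2) (auto intro: integral_nonneg_AE)
  finally have "(\<integral>\<^sup>+x. (\<Sum>k. ennreal (f k x)) \<partial>M) \<noteq> \<infinity>"
    by simp
  then have "AE x in M. (\<Sum>k. ennreal (f k x)) \<noteq> \<infinity>"
    by (intro nn_integral_PInf_AE) measurable
  then show ?thesis
    using AE_space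
  proof eventually_elim
    case (elim x)
    then have "summable (\<lambda>k. f k x)"
      using nonneg by (intro summable_suminf_not_top) auto
    then show ?case
      by (rule summable_LIMSEQ_zero)
  qed
qed

lemma filterlim_floor_sqrt_at_top: "filterlim floor_sqrt at_top sequentially"
  unfolding filterlim_at_top eventually_sequentially
  by (meson le_floor_sqrtI)

lemma tendsto_zero_of_square_subsequence:
  fixes s :: "nat \<Rightarrow> real"
  assumes jump: "\<And>n. \<bar>s (Suc n) - s n\<bar> \<le> B"
    and squares: "(\<lambda>k. s (k\<^sup>2) / real (k\<^sup>2)) \<longlonglongrightarrow> 0"
  shows "(\<lambda>n. s n / real n) \<longlonglongrightarrow> 0"
proof -
  have B: "0 \<le> B"
    using order_trans[OF abs_ge_zero jump[of 0]] .
  have incr: "\<bar>s n - s m\<bar> \<le> B * (real n - real m)" if "m \<le> n" for m n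
    using that
  proof (induction n rule: dec_induct)
    case (step n)
    then show ?case
      using jump[of n] by (simp add: algebra_simps)
  qed simp
  define h where "h k = \<bar>s (k\<^sup>2) / real (k\<^sup>2)\<bar> + 2 * B / real k" for k
  have "h \<longlonglongrightarrow> 0"
    unfolding h_def using tendsto_rabs_zero[OF squares] lim_const_over_n[of "2 * B"]
    by (rule tendsto_add_zero)
  then have lim: "(\<lambda>n. h (floor_sqrt n)) \<longlonglongrightarrow> 0"
    using filterlim_floor_sqrt_at_top by (rule filterlim_compose)
  have "\<bar>s n / real n\<bar> \<le> h (floor_sqrt n)" if "1 \<le> n" for n
  proof -
    define k where "k = floor_sqrt n"
    have "n < (Suc k)\<^sup>2"
      unfolding k_def by (rule Suc_floor_sqrt_power2_gt)
    then have "n \<le> k\<^sup>2 + 2 * k"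
      by (simp add: power2_eq_square)
    then have "real n \<le> real (k\<^sup>2 + 2 * k)"
      by (rule of_nat_mono)
    then have "real n - real (k\<^sup>2) \<le> 2 * real k"
      by simp
    moreover have k: "1 \<le> k" "k\<^sup>2 \<le> n"
      using that by (simp_all add: k_def le_floor_sqrtI)
    ultimately have "\<bar>s n - s (k\<^sup>2)\<bar> \<le> B * (2 * real k)"
      using incr[OF k(2)] B by (meson mult_left_mono order_trans)
    then have "\<bar>s n\<bar> \<le> \<bar>s (k\<^sup>2)\<bar> + B * (2 * real k)"
      by linarith
    then have "\<bar>s n\<bar> / real n \<le> (\<bar>s (k\<^sup>2)\<bar> + B * (2 * real k)) / real (k\<^sup>2)"
      using k B by (intro frac_le) auto
    also have "\<dots> = h k"
      using k by (simp add: h_def abs_div power2_eq_square field_simps)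
    finally show ?thesis
      by (simp add: k_def abs_div)
  qed
  then have "\<forall>\<^sub>F n in sequentially. norm (s n / real n) \<le> h (floor_sqrt n)"
    by (intro eventually_sequentiallyI[of 1]) simp
  then show ?thesis
    using lim by (rule Lim_null_comparison)
qed

lemma (in prob_space) averages_tendsto_zero_AE:
  fixes Z :: "nat \<Rightarrow> 'a \<Rightarrow> real"
  assumes meas: "\<And>n. Z n \<in> borel_measurable M"
    and bound: "\<And>n x. x \<in> space M \<Longrightarrow> \<bar>Z n x\<bar> \<le> B"
    and sq: "\<And>N. (\<integral>x. (\<Sum>n\<in>{1..N}. Z n x)\<^sup>2 \<partial>M) \<le> C * real N"
  shows "AE x in M. (\<lambda>N. (\<Sum>n\<in>{1..N}. Z n x) / real N) \<longlonglongrightarrow> 0"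
proof -
  define S where "S N x = (\<Sum>n\<in>{1..N}. Z n x)" for N x
  have int: "integrable M (\<lambda>x. (S N x / real N)\<^sup>2)" for N
    unfolding S_def power_divide using integrable_sum_bounded(2)[OF meas bound] by simp
  have sq': "(\<integral>x. (S N x / real N)\<^sup>2 \<partial>M) \<le> C / real N" for N
    unfolding S_def using sq by (rule integral_average_sq_le)
  \<comment> \<open>Borel--Cantelli along the subsequence of squares.\<close>
  have "summable (\<lambda>k. \<integral>x. (S (k\<^sup>2) x / real (k\<^sup>2))\<^sup>2 \<partial>M)"
  proof (rule summable_comparison_test)
    show "summable (\<lambda>k. C * inverse (real k ^ 2))"
      by (intro summable_mult inverse_power_summable) simp
    show "\<exists>N. \<forall>k\<ge>N. norm (\<integral>x. (S (k\<^sup>2) x / real (k\<^sup>2))\<^sup>2 \<partial>M) \<le> C * inverse (real k ^ 2)"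
      using sq'[of "k\<^sup>2" for k] by (auto simp: divide_inverse)
  qed
  then have "AE x in M. (\<lambda>k. (S (k\<^sup>2) x / real (k\<^sup>2))\<^sup>2) \<longlonglongrightarrow> 0"
    using int[of "k\<^sup>2" for k] by (intro AE_tendsto_zero_of_summable_integral) auto
  then show ?thesis
    using AE_space
  proof eventually_elim
    case (elim x)
    then have "(\<lambda>k. S (k\<^sup>2) x / real (k\<^sup>2)) \<longlonglongrightarrow> 0"
      by simp
    moreover have "\<bar>S (Suc N) x - S N x\<bar> \<le> B" for N
      using bound[OF elim(2)] by (simp add: S_def)
    ultimately show ?case
      unfolding S_def[symmetric] by (rule tendsto_zero_of_square_subsequence[rotated])
  qed
qed

section \<open>Lebesgue measure on the unit interval\<close>

lemma space_unit_lebesgue [simp]: "space unit_lebesgue = {0..1}"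
  by (simp add: unit_lebesgue_def space_restrict_space)

lemma sets_unit_lebesgue: "A \<in> sets unit_lebesgue \<longleftrightarrow> A \<subseteq> {0..1} \<and> A \<in> sets borel"
  by (auto simp: unit_lebesgue_def sets_restrict_space_iff)

lemma borel_measurable_unit_lebesgue [measurable (raw)]:
  "f \<in> borel_measurable borel \<Longrightarrow> f \<in> borel_measurable unit_lebesgue"
  unfolding unit_lebesgue_def by (simp add: measurable_restrict_space1)

lemma emeasure_unit_lebesgue:
  "A \<subseteq> {0..1} \<Longrightarrow> emeasure unit_lebesgue A = emeasure lborel A"
  unfolding unit_lebesgue_def by (rule emeasure_restrict_space) auto

lemma prob_space_unit_lebesgue: "prob_space unit_lebesgue"
  by (rule prob_spaceI) (simp add: emeasure_unit_lebesgue)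

interpretation unit_lebesgue: prob_space unit_lebesgue
  by (rule prob_space_unit_lebesgue)

lemma integrable_unit_lebesgue_bounded:
  fixes f :: "real \<Rightarrow> real"
  assumes [measurable]: "f \<in> borel_measurable borel" and "\<And>y. y \<in> {0..1} \<Longrightarrow> \<bar>f y\<bar> \<le> B"
  shows "integrable unit_lebesgue f"
  using assms(2) by (intro unit_lebesgue.integrable_const_bound[where B=B]) auto

lemma integral_unit_lebesgue_reflect:
  fixes f :: "real \<Rightarrow> real"
  assumes [measurable]: "f \<in> borel_measurable borel"
  shows "(\<integral>x. f (1 - x) \<partial>unit_lebesgue) = (\<integral>x. f x \<partial>unit_lebesgue)"
proof -
  have "indicator {0..1} (1 - x) = (indicator {0..1} x :: real)" for x :: real
    by (auto simp: indicator_def)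
  then show ?thesis
    using lborel_integral_real_affine[of "-1" "\<lambda>x. indicator {0..1} x * f x" 1]
    by (simp add: unit_lebesgue_def integral_restrict_space mult.commute)
qed

lemma integrable_unit_lebesgue_mult:
  fixes f g :: "real \<Rightarrow> real"
  assumes [measurable]: "f \<in> borel_measurable borel" "g \<in> borel_measurable borel"
    and "\<And>y. y \<in> {0..1} \<Longrightarrow> \<bar>f y\<bar> \<le> B" "\<And>y. y \<in> {0..1} \<Longrightarrow> \<bar>g y\<bar> \<le> C"
  shows "integrable unit_lebesgue (\<lambda>y. f y * g y)"
proof (rule integrable_unit_lebesgue_bounded[where B="B * C"])
  fix y :: real
  assume "y \<in> {0..1}"
  then show "\<bar>f y * g y\<bar> \<le> B * C"
    unfolding abs_mult using assms(3,4) by (intro mult_mono) (auto intro: order_trans[OF abs_ge_zero])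
qed measurable

lemma integral_centred_coordinate_mult_symmetric:
  fixes f :: "real \<Rightarrow> real"
  assumes [measurable]: "f \<in> borel_measurable borel" and sym: "\<And>y. y \<in> {0..1} \<Longrightarrow> f (1 - y) = f y"
  shows "(\<integral>y. (2 * y - 1) * f y \<partial>unit_lebesgue) = 0"
proof -
  have "(\<integral>y. (2 * y - 1) * f y \<partial>unit_lebesgue) = (\<integral>y. (2 * (1 - y) - 1) * f (1 - y) \<partial>unit_lebesgue)"
    by (rule integral_unit_lebesgue_reflect[symmetric]) measurable
  also have "\<dots> = (\<integral>y. - ((2 * y - 1) * f y) \<partial>unit_lebesgue)"
    by (rule Bochner_Integration.integral_cong) (auto simp: sym algebra_simps)
  finally show ?thesis
    by simp
qed

lemma integral_centred_coordinate_sq: "(\<integral>y. (2 * y - 1)\<^sup>2 \<partial>unit_lebesgue) = 1 / 3"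
proof -
  have "(\<integral>y. (2 * y - 1)\<^sup>2 \<partial>unit_lebesgue) = (\<integral>y. (2 * y - 1)\<^sup>2 * indicator {0..1} y \<partial>lborel)"
    by (simp add: unit_lebesgue_def integral_restrict_space mult.commute)
  also have "\<dots> = (2 * 1 - 1) ^ 3 / 6 - (2 * 0 - 1) ^ 3 / 6"
    by (rule integral_FTC_Icc_real[where F="\<lambda>y. (2 * y - 1) ^ 3 / 6"])
      (auto intro!: derivative_eq_intros simp: power2_eq_square)
  finally show ?thesis
    by simp
qed

lemma integrable_centred_coordinate: "integrable unit_lebesgue (\<lambda>y. 2 * y - 1 :: real)"
  by (rule integrable_unit_lebesgue_bounded[where B=1]) auto

lemma integral_centred_coordinate: "(\<integral>y. 2 * y - 1 \<partial>unit_lebesgue) = (0::real)"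
  using integral_centred_coordinate_mult_symmetric[of "\<lambda>_. 1"] by simp

section \<open>The tent map preserves Lebesgue measure\<close>

lemma tent_eq_tent01: "x \<in> {0..1} \<Longrightarrow> tent x = tent01 x"
proof (cases "x = 1")
  case False
  moreover assume "x \<in> {0..1}"
  ultimately have "\<lfloor>x\<rfloor> = 0"
    by (simp add: floor_eq_iff)
  then show ?thesis
    by (simp add: tent_def)
qed (simp add: tent_def tent01_def)

lemma tent_in_unit: "tent x \<in> {0..1}"
  using frac_ge_0[of x] frac_lt_1[of x] by (auto simp: tent_def tent01_def frac_def)

lemma tent_one_minus: "x \<in> {0..1} \<Longrightarrow> tent (1 - x) = tent x"
  by (simp add: tent_eq_tent01 tent01_def)

lemma borel_measurable_tent [measurable]: "tent \<in> borel_measurable borel"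
  unfolding tent_def tent01_def by measurable

lemma tent_iter_0 [simp]: "tent_iter 0 x = x"
  by (simp add: tent_iter_def)

lemma tent_iter_Suc: "tent_iter (Suc n) x = tent_iter n (tent x)"
  by (simp add: tent_iter_def funpow_swap1)

lemma tent_iter_add: "tent_iter (n + m) x = tent_iter n (tent_iter m x)"
  by (simp add: tent_iter_def funpow_add)

lemma tent_iter_1 [simp]: "tent_iter (Suc 0) x = tent x"
  by (simp add: tent_iter_def)

lemma tent_iter_one_minus: "1 \<le> n \<Longrightarrow> x \<in> {0..1} \<Longrightarrow> tent_iter n (1 - x) = tent_iter n x"
  by (cases n) (simp_all add: tent_iter_Suc tent_one_minus)

lemma tent_iter_in_unit: "n \<ge> 1 \<or> x \<in> {0..1} \<Longrightarrow> tent_iter n x \<in> {0..1}"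
  by (cases n) (simp_all add: tent_iter_def tent_in_unit del: atLeastAtMost_iff)

lemma borel_measurable_tent_iter [measurable]: "tent_iter n \<in> borel_measurable borel"
  unfolding tent_iter_def by (induction n) auto

lemma tent_iter_measurable_unit_lebesgue:
  "tent_iter n \<in> unit_lebesgue \<rightarrow>\<^sub>M unit_lebesgue"
  unfolding unit_lebesgue_def
  by (intro measurable_restrict_space3) (auto simp del: atLeastAtMost_iff intro: tent_iter_in_unit)

lemma distr_tent_unit_lebesgue: "distr unit_lebesgue unit_lebesgue tent = unit_lebesgue"
proof (rule measure_eqI)
  fix A assume "A \<in> sets (distr unit_lebesgue unit_lebesgue tent)"
  then have A: "A \<subseteq> {0..1}" and [measurable]: "A \<in> sets borel"
    by (auto simp: sets_unit_lebesgue)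
  have tent_meas: "tent \<in> unit_lebesgue \<rightarrow>\<^sub>M unit_lebesgue"
    using tent_iter_measurable_unit_lebesgue[of 1] by (simp add: tent_iter_def)
  \<comment> \<open>For x \<noteq> 1/2 at most one of 2x and 2 - 2x lies in [0,1]; for x in [0,1] that one is tent x.\<close>
  have split: "indicator (tent -` A \<inter> {0..1}) x = indicator A (0 + 2 * x) + (indicator A (2 + (-2) * x) :: ennreal)"
    if "x \<noteq> 1/2" for x
  proof -
    have "2 * x \<in> A \<Longrightarrow> x \<in> {0..1/2}" "2 - 2 * x \<in> A \<Longrightarrow> x \<in> {1/2..1}"
      using A by auto
    with that show ?thesis
      by (cases "x \<in> {0..1}") (auto simp: indicator_def tent_eq_tent01 tent01_def)
  qed
  have "emeasure (distr unit_lebesgue unit_lebesgue tent) A = emeasure lborel (tent -` A \<inter> {0..1})"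
    using tent_meas A by (simp add: emeasure_distr sets_unit_lebesgue emeasure_unit_lebesgue)
  also have "\<dots> = (\<integral>\<^sup>+x. indicator (tent -` A \<inter> {0..1}) x \<partial>lborel)"
    by (rule nn_integral_indicator[symmetric]) measurable
  also have "\<dots> = (\<integral>\<^sup>+x. indicator A (0 + 2 * x) + indicator A (2 + (-2) * x) \<partial>lborel)"
    by (intro nn_integral_cong_AE eventually_mono[OF AE_lborel_singleton[of "1/2"]] split)
  also have "\<dots> = (\<integral>\<^sup>+x. indicator A (0 + 2 * x) \<partial>lborel) + (\<integral>\<^sup>+x. indicator A (2 + (-2) * x) \<partial>lborel)"
    by (rule nn_integral_add) auto
  also have "\<dots> = 2 * (\<integral>\<^sup>+x. indicator A (0 + 2 * x) \<partial>lborel)"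
    using nn_integral_real_affine[of "\<lambda>x. indicator A (0 + 2 * x)" "-1" 1]
    by (simp add: mult_2 algebra_simps)
  also have "\<dots> = emeasure lborel A"
    using nn_integral_real_affine[of "indicator A" 2 0] by simp
  finally show "emeasure (distr unit_lebesgue unit_lebesgue tent) A = emeasure unit_lebesgue A"
    using A by (simp add: emeasure_unit_lebesgue)
qed simp

lemma distr_tent_iter_unit_lebesgue: "distr unit_lebesgue unit_lebesgue (tent_iter n) = unit_lebesgue"
proof (induction n)
  case (Suc n)
  have "tent_iter (Suc n) = tent_iter n \<circ> tent"
    by (simp add: tent_iter_Suc fun_eq_iff)
  then have "distr unit_lebesgue unit_lebesgue (tent_iter (Suc n))
      = distr (distr unit_lebesgue unit_lebesgue tent) unit_lebesgue (tent_iter n)"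
    using tent_iter_measurable_unit_lebesgue[of 1] tent_iter_measurable_unit_lebesgue[of n]
    by (simp add: distr_distr tent_iter_def)
  then show ?case
    by (simp add: distr_tent_unit_lebesgue Suc)
qed (simp add: tent_iter_def distr_id)

lemma integral_tent_iter:
  fixes f :: "real \<Rightarrow> real"
  assumes "f \<in> borel_measurable unit_lebesgue"
  shows "(\<integral>x. f (tent_iter n x) \<partial>unit_lebesgue) = (\<integral>x. f x \<partial>unit_lebesgue)"
  using integral_distr[OF tent_iter_measurable_unit_lebesgue assms]
  by (simp add: distr_tent_iter_unit_lebesgue)

lemma distr_tent_iter_comp:
  fixes f :: "real \<Rightarrow> real"
  assumes "f \<in> borel_measurable unit_lebesgue"
  shows "distr unit_lebesgue borel (\<lambda>x. f (tent_iter n x)) = distr unit_lebesgue borel f"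
  using distr_distr[OF assms tent_iter_measurable_unit_lebesgue]
  by (simp add: distr_tent_iter_unit_lebesgue comp_def)

section \<open>The tent series and its correlations\<close>

definition tent_series :: "real \<Rightarrow> real \<Rightarrow> real" where
  "tent_series r y = (\<Sum>k. r ^ k * tent_iter k y)"

lemma summable_abs_tent_series:
  assumes "\<bar>r\<bar> < 1"
  shows "summable (\<lambda>k. \<bar>r ^ k * tent_iter k y\<bar>)"
proof (rule summable_comparison_test)
  have "\<bar>tent_iter k y\<bar> \<le> \<bar>y\<bar> + 1" for k
    using tent_iter_in_unit[of k y] by (cases k) auto
  then show "\<exists>N. \<forall>k\<ge>N. norm \<bar>r ^ k * tent_iter k y\<bar> \<le> (\<bar>y\<bar> + 1) * \<bar>r\<bar> ^ k"
    by (auto simp: abs_mult power_abs mult.commute intro!: mult_right_mono)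
  show "summable (\<lambda>k. (\<bar>y\<bar> + 1) * \<bar>r\<bar> ^ k)"
    using assms by (intro summable_mult) simp
qed

lemma tent_series_rec:
  assumes "\<bar>r\<bar> < 1"
  shows "tent_series r y = y + r * tent_series r (tent y)"
proof -
  have sums: "summable (\<lambda>k. r ^ k * tent_iter k z)" for z
    using summable_abs_tent_series[OF assms] by (rule summable_rabs_cancel)
  have "tent_series r y = (\<Sum>k. r ^ Suc k * tent_iter (Suc k) y) + y"
    unfolding tent_series_def by (subst suminf_split_head[OF sums]) simp
  also have "(\<Sum>k. r ^ Suc k * tent_iter (Suc k) y) = r * tent_series r (tent y)"
    unfolding tent_series_def tent_iter_Suc
    by (subst suminf_mult[OF sums, symmetric]) (simp add: algebra_simps)
  finally show ?thesis
    by simp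
qed

lemma abs_tent_series_le:
  assumes "\<bar>r\<bar> < 1" and "y \<in> {0..1}"
  shows "\<bar>tent_series r y\<bar> \<le> 1 / (1 - \<bar>r\<bar>)"
proof -
  have "\<bar>tent_series r y\<bar> \<le> (\<Sum>k. \<bar>r ^ k * tent_iter k y\<bar>)"
    unfolding tent_series_def using summable_abs_tent_series[OF assms(1)] by (rule summable_rabs)
  also have "\<dots> \<le> (\<Sum>k. \<bar>r\<bar> ^ k)"
  proof (rule suminf_le)
    show "\<bar>r ^ k * tent_iter k y\<bar> \<le> \<bar>r\<bar> ^ k" for k
      using tent_iter_in_unit[of k y] assms(2) by (auto simp: abs_mult power_abs intro!: mult_left_le)
  qed (use assms summable_abs_tent_series in auto)
  also have "\<dots> = 1 / (1 - \<bar>r\<bar>)"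
    using assms by (simp add: suminf_geometric)
  finally show ?thesis .
qed

lemma borel_measurable_tent_series [measurable]:
  assumes "\<bar>r\<bar> < 1"
  shows "tent_series r \<in> borel_measurable borel"
proof (rule borel_measurable_LIMSEQ_real)
  show "(\<lambda>n. \<Sum>k<n. r ^ k * tent_iter k y) \<longlonglongrightarrow> tent_series r y" for y
    unfolding tent_series_def
    using summable_rabs_cancel[OF summable_abs_tent_series[OF assms]] by (rule summable_LIMSEQ)
qed measurable

text \<open>The tail of f_r from n = N is r^N tent_series r (tent_iter N x), and the normaliser
  (1/2) sum over n >= N of r^n is r^N / (2 (1 - r)).\<close>
definition remq_limit :: "real \<Rightarrow> real \<Rightarrow> real" where
  "remq_limit r y = 2 * (1 - r) * tent_series r y"

lemma borel_measurable_remq_limit [measurable]: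
  "\<bar>r\<bar> < 1 \<Longrightarrow> remq_limit r \<in> borel_measurable borel"
  unfolding remq_limit_def by measurable

lemma remq_eq_remq_limit:
  assumes "0 < \<bar>r\<bar>" "\<bar>r\<bar> < 1" "1 \<le> N"
  shows "remq r N x = remq_limit r (tent_iter N x)"
proof -
  define a where "a n = r ^ n * tent_iter n x" for n
  have sa: "summable a"
    unfolding a_def using summable_abs_tent_series[OF assms(2)] by (rule summable_rabs_cancel)
  have "{..<N} = insert 0 {1..<N}"
    using assms(3) by auto
  then have "f_r r x - f_rN r N x = (\<Sum>n. a (n + N))"
    using suminf_split_head[OF sa] suminf_split_initial_segment[OF sa, of N]
    by (simp add: f_r_def f_rN_def a_def)
  also have "\<dots> = (\<Sum>n. r ^ N * (r ^ n * tent_iter n (tent_iter N x)))"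
    by (simp add: a_def tent_iter_add power_add algebra_simps)
  also have "\<dots> = r ^ N * tent_series r (tent_iter N x)"
    unfolding tent_series_def
    by (rule suminf_mult[OF summable_rabs_cancel[OF summable_abs_tent_series[OF assms(2)]]])
  finally have num: "f_r r x - f_rN r N x = r ^ N * tent_series r (tent_iter N x)" .
  have den: "(\<Sum>n. r ^ (n + N)) = r ^ N / (1 - r)"
    using assms suminf_mult[OF summable_geometric[of r], of "r ^ N"]
    by (simp add: power_add suminf_geometric mult.commute)
  have "r \<noteq> 0" "1 - r \<noteq> 0"
    using assms by auto
  then show ?thesis
    unfolding remq_def remq_limit_def num den by (simp add: field_simps)
qed

definition centred_series :: "real \<Rightarrow> real \<Rightarrow> real" where
  "centred_series r y = remq_limit r y - 1"

lemma borel_measurable_centred_series [measurable]: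
  "\<bar>r\<bar> < 1 \<Longrightarrow> centred_series r \<in> borel_measurable borel"
  unfolding centred_series_def by measurable

lemma centred_series_rec:
  "\<bar>r\<bar> < 1 \<Longrightarrow> centred_series r y = (1 - r) * (2 * y - 1) + r * centred_series r (tent y)"
  unfolding centred_series_def remq_limit_def by (subst tent_series_rec) (auto simp: algebra_simps)

lemma abs_centred_series_le:
  assumes "\<bar>r\<bar> < 1" and "y \<in> {0..1}"
  shows "\<bar>centred_series r y\<bar> \<le> 4 / (1 - \<bar>r\<bar>)"
proof -
  have "\<bar>2 * (1 - r) * tent_series r y\<bar> \<le> 2 * (1 + \<bar>r\<bar>) * (1 / (1 - \<bar>r\<bar>))"
  proof -
    have "\<bar>1 - r\<bar> \<le> 1 + \<bar>r\<bar>"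
      by linarith
    then show ?thesis
      unfolding abs_mult using abs_tent_series_le[OF assms] by (intro mult_mono) auto
  qed
  moreover have "2 * (1 + \<bar>r\<bar>) * (1 / (1 - \<bar>r\<bar>)) + 1 = (3 + \<bar>r\<bar>) / (1 - \<bar>r\<bar>)"
    using assms by (simp add: field_simps)
  moreover have "(3 + \<bar>r\<bar>) / (1 - \<bar>r\<bar>) \<le> 4 / (1 - \<bar>r\<bar>)"
    using assms by (intro divide_right_mono) auto
  ultimately show ?thesis
    unfolding centred_series_def remq_limit_def by linarith
qed

lemma integrable_mult_centred_series:
  fixes f :: "real \<Rightarrow> real"
  assumes "\<bar>r\<bar> < 1" and "f \<in> borel_measurable borel" and "\<And>y. y \<in> {0..1} \<Longrightarrow> \<bar>f y\<bar> \<le> B"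
  shows "integrable unit_lebesgue (\<lambda>y. f y * centred_series r (tent_iter n y))"
  using assms abs_centred_series_le[OF assms(1) tent_iter_in_unit]
  by (intro integrable_unit_lebesgue_mult) auto

lemma integrable_centred_series:
  "\<bar>r\<bar> < 1 \<Longrightarrow> integrable unit_lebesgue (\<lambda>y. centred_series r (tent_iter n y))"
  using integrable_mult_centred_series[of r "\<lambda>_. 1" 1] by simp

lemma integrable_centred_series_mult_centred_series:
  "\<bar>r\<bar> < 1 \<Longrightarrow>
    integrable unit_lebesgue (\<lambda>y. centred_series r (tent_iter m y) * centred_series r (tent_iter n y))"
  using abs_centred_series_le[OF _ tent_iter_in_unit] by (intro integrable_mult_centred_series) auto

lemma integrable_centred_coordinate_mult_centred_series:
  "\<bar>r\<bar> < 1 \<Longrightarrow> integrable unit_lebesgue (\<lambda>y. (2 * y - 1) * centred_series r (tent_iter n y))"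
  by (rule integrable_mult_centred_series[where B=1]) auto

lemma integral_centred_coordinate_mult_centred_series:
  "\<bar>r\<bar> < 1 \<Longrightarrow> 1 \<le> n \<Longrightarrow>
    (\<integral>y. (2 * y - 1) * centred_series r (tent_iter n y) \<partial>unit_lebesgue) = 0"
  by (intro integral_centred_coordinate_mult_symmetric) (auto simp: tent_iter_one_minus)

lemma integral_centred_series:
  assumes r: "\<bar>r\<bar> < 1"
  shows "(\<integral>y. centred_series r y \<partial>unit_lebesgue) = 0"
proof -
  have rec: "centred_series r y = (1 - r) * (2 * y - 1) + r * centred_series r (tent_iter 1 y)" for y
    using centred_series_rec[OF r, of y] by simp
  have "(\<integral>y. centred_series r y \<partial>unit_lebesgue)
      = (\<integral>y. (1 - r) * (2 * y - 1) + r * centred_series r (tent_iter 1 y) \<partial>unit_lebesgue)"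
    by (rule Bochner_Integration.integral_cong[OF refl rec])
  also have "\<dots> = r * (\<integral>y. centred_series r (tent_iter 1 y) \<partial>unit_lebesgue)"
    using integrable_centred_series[OF r, of 1] integrable_centred_coordinate
    by (simp add: integral_centred_coordinate)
  also have "\<dots> = r * (\<integral>y. centred_series r y \<partial>unit_lebesgue)"
    using r by (subst integral_tent_iter) measurable
  finally show ?thesis
    using r by (auto simp: algebra_simps)
qed

lemma integral_centred_series_correlation:
  assumes r: "\<bar>r\<bar> < 1"
  shows "(\<integral>y. centred_series r y * centred_series r (tent_iter d y) \<partial>unit_lebesgue)
    = r ^ d * (\<integral>y. (centred_series r y)\<^sup>2 \<partial>unit_lebesgue)"
proof (induction d)
  case 0
  then show ?case
    by (simp add: power2_eq_square)
next
  case (Suc d)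
  let ?V = "centred_series r"
  have rec: "?V y * ?V (tent_iter (Suc d) y)
      = (1 - r) * ((2 * y - 1) * ?V (tent_iter (Suc d) y))
        + r * (?V (tent y) * ?V (tent_iter d (tent y)))" for y
    by (subst centred_series_rec[OF r, of y]) (simp add: tent_iter_Suc algebra_simps)
  have "(\<integral>y. ?V y * ?V (tent_iter (Suc d) y) \<partial>unit_lebesgue)
      = (\<integral>y. (1 - r) * ((2 * y - 1) * ?V (tent_iter (Suc d) y))
          + r * (?V (tent y) * ?V (tent_iter d (tent y))) \<partial>unit_lebesgue)"
    by (rule Bochner_Integration.integral_cong[OF refl rec])
  also have "\<dots> = (1 - r) * (\<integral>y. (2 * y - 1) * ?V (tent_iter (Suc d) y) \<partial>unit_lebesgue)
      + r * (\<integral>y. ?V (tent y) * ?V (tent_iter d (tent y)) \<partial>unit_lebesgue)"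
  proof -
    have "integrable unit_lebesgue (\<lambda>y. (2 * y - 1) * ?V (tent_iter (Suc d) y))"
      by (rule integrable_centred_coordinate_mult_centred_series[OF r])
    moreover have "integrable unit_lebesgue (\<lambda>y. ?V (tent y) * ?V (tent_iter d (tent y)))"
      using integrable_centred_series_mult_centred_series[OF r, of 1 "Suc d"] by (simp add: tent_iter_Suc)
    ultimately show ?thesis
      by simp
  qed
  also have "(\<integral>y. (2 * y - 1) * ?V (tent_iter (Suc d) y) \<partial>unit_lebesgue) = 0"
    using r by (simp add: integral_centred_coordinate_mult_centred_series)
  also have "(\<integral>y. ?V (tent y) * ?V (tent_iter d (tent y)) \<partial>unit_lebesgue)
      = (\<integral>y. ?V y * ?V (tent_iter d y) \<partial>unit_lebesgue)"
    using r integral_tent_iter[of "\<lambda>y. ?V y * ?V (tent_iter d y)" 1] by simp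
  finally show ?case
    by (simp add: Suc)
qed

lemma integral_centred_coordinate_mult_centred_series_self:
  assumes r: "\<bar>r\<bar> < 1"
  shows "(\<integral>y. (2 * y - 1) * centred_series r y \<partial>unit_lebesgue) = (1 - r) / 3"
proof -
  let ?V = "centred_series r"
  have "(\<integral>y. (2 * y - 1) * ?V y \<partial>unit_lebesgue)
      = (\<integral>y. (1 - r) * (2 * y - 1)\<^sup>2 + r * ((2 * y - 1) * ?V (tent_iter 1 y)) \<partial>unit_lebesgue)"
    by (intro Bochner_Integration.integral_cong refl, subst centred_series_rec[OF r])
      (simp add: power2_eq_square algebra_simps)
  also have "\<dots> = (1 - r) * (\<integral>y. (2 * y - 1)\<^sup>2 \<partial>unit_lebesgue)
      + r * (\<integral>y. (2 * y - 1) * ?V (tent_iter 1 y) \<partial>unit_lebesgue)"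
    using integrable_centred_coordinate_mult_centred_series[OF r, of 1]
      integrable_unit_lebesgue_bounded[of "\<lambda>y. (2 * y - 1)\<^sup>2" 1]
    by (simp add: abs_square_le_1 abs_le_iff)
  also have "\<dots> = (1 - r) / 3"
    using integral_centred_coordinate_mult_centred_series[OF r, of 1]
    by (simp add: integral_centred_coordinate_sq)
  finally show ?thesis .
qed

lemma integral_centred_series_sq:
  assumes r: "\<bar>r\<bar> < 1"
  shows "(\<integral>y. (centred_series r y)\<^sup>2 \<partial>unit_lebesgue) = (1 - r) / (3 * (1 + r))"
proof -
  let ?V = "centred_series r"
  let ?\<sigma> = "\<integral>y. (?V y)\<^sup>2 \<partial>unit_lebesgue"
  have "?\<sigma> = (\<integral>y. (1 - r) * ((2 * y - 1) * ?V y) + r * (?V y * ?V (tent_iter 1 y)) \<partial>unit_lebesgue)"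
    unfolding power2_eq_square
    by (intro Bochner_Integration.integral_cong refl, subst (2) centred_series_rec[OF r])
      (simp add: algebra_simps)
  also have "\<dots> = (1 - r) * (\<integral>y. (2 * y - 1) * ?V y \<partial>unit_lebesgue)
      + r * (\<integral>y. ?V y * ?V (tent_iter 1 y) \<partial>unit_lebesgue)"
    using integrable_centred_coordinate_mult_centred_series[OF r, of 0]
      integrable_centred_series_mult_centred_series[OF r, of 0 1]
    by simp
  also have "\<dots> = (1 - r)\<^sup>2 / 3 + r\<^sup>2 * ?\<sigma>"
    using integral_centred_series_correlation[OF r, of 1]
    by (simp add: integral_centred_coordinate_mult_centred_series_self[OF r] power2_eq_square)
  finally have "(1 - r) * (3 * (1 + r) * ?\<sigma> - (1 - r)) = 0"
    by algebra
  moreover have "1 - r \<noteq> 0" "1 + r \<noteq> 0"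
    using r by auto
  ultimately have "?\<sigma> * (3 * (1 + r)) = 1 - r"
    by (simp only: mult_eq_0_iff right_minus_eq mult_ac) simp
  then show ?thesis
    using \<open>1 + r \<noteq> 0\<close> by (simp add: eq_divide_eq)
qed

lemma integral_centred_series_tent_iter_correlation:
  assumes r: "\<bar>r\<bar> < 1" and "n \<le> m"
  shows "(\<integral>x. centred_series r (tent_iter n x) * centred_series r (tent_iter m x) \<partial>unit_lebesgue)
    = r ^ (m - n) * ((1 - r) / (3 * (1 + r)))"
proof -
  have "tent_iter m x = tent_iter (m - n) (tent_iter n x)" for x
    using assms(2) tent_iter_add[of "m - n" n x] by simp
  then have "(\<integral>x. centred_series r (tent_iter n x) * centred_series r (tent_iter m x) \<partial>unit_lebesgue)
      = (\<integral>y. centred_series r y * centred_series r (tent_iter (m - n) y) \<partial>unit_lebesgue)"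
    using r by (simp add: integral_tent_iter[where f="\<lambda>y. centred_series r y * centred_series r (tent_iter (m - n) y)"])
  then show ?thesis
    by (simp add: integral_centred_series_correlation[OF r] integral_centred_series_sq[OF r])
qed

lemma integral_sum_centred_series_sq_le:
  assumes r: "\<bar>r\<bar> < 1"
  shows "(\<integral>x. (\<Sum>n\<in>{1..N}. centred_series r (tent_iter n x))\<^sup>2 \<partial>unit_lebesgue)
    \<le> 2 * ((1 - r) / (3 * (1 + r))) / (1 - \<bar>r\<bar>) * real N"
proof -
  let ?\<sigma> = "(1 - r) / (3 * (1 + r))"
  have "0 \<le> ?\<sigma>"
    using r by simp
  then have "\<bar>\<integral>x. centred_series r (tent_iter n x) * centred_series r (tent_iter m x) \<partial>unit_lebesgue\<bar>
      \<le> ?\<sigma> * \<bar>r\<bar> ^ (m - n)" if "n \<le> m" for n m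
    unfolding integral_centred_series_tent_iter_correlation[OF r that]
    by (simp only: abs_mult power_abs abs_of_nonneg mult.commute order_refl)
  then show ?thesis
    using integral_sum_sq_le_of_correlation[where M=unit_lebesgue and A="{1..N}" and q="\<bar>r\<bar>"
        and c="?\<sigma>" and Z="\<lambda>n x. centred_series r (tent_iter n x)"]
      integrable_centred_series_mult_centred_series[OF r] r
    by simp
qed

section \<open>The normalised remainders\<close>

lemma weak_conv_m_eventually_const:
  assumes "\<forall>\<^sub>F n in sequentially. \<mu> n = \<nu>"
  shows "weak_conv_m \<mu> \<nu>"
  unfolding weak_conv_m_def weak_conv_def
  using assms by (auto intro: tendsto_eventually elim: eventually_mono)

lemma distr_remq:
  assumes "0 < \<bar>r\<bar>" "\<bar>r\<bar> < 1" "1 \<le> N"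
  shows "distr unit_lebesgue borel (remq r N) = distr unit_lebesgue borel (remq_limit r)"
proof -
  have "remq_limit r \<in> borel_measurable unit_lebesgue"
    using assms(2) by measurable
  moreover have "remq r N = (\<lambda>x. remq_limit r (tent_iter N x))"
    using remq_eq_remq_limit[OF assms] by (rule ext)
  ultimately show ?thesis
    using distr_tent_iter_comp by simp
qed

lemma integrable_remq_limit:
  assumes "\<bar>r\<bar> < 1"
  shows "integrable unit_lebesgue (remq_limit r)"
proof -
  have "integrable unit_lebesgue (\<lambda>y. 1 + centred_series r y)"
    using integrable_centred_series[OF assms, of 0] by simp
  then show ?thesis
    by (simp add: centred_series_def)
qed

lemma integral_remq_limit:
  assumes r: "\<bar>r\<bar> < 1"
  shows "(\<integral>y. remq_limit r y \<partial>unit_lebesgue) = 1"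
proof -
  have "(\<integral>y. remq_limit r y \<partial>unit_lebesgue) = (\<integral>y. centred_series r y + 1 \<partial>unit_lebesgue)"
    by (simp add: centred_series_def)
  also have "\<dots> = 1"
    using integrable_centred_series[OF r, of 0] unit_lebesgue.prob_space
    by (simp add: integral_centred_series[OF r])
  finally show ?thesis .
qed

lemma not_AE_eq_const_remq_limit:
  assumes r: "\<bar>r\<bar> < 1"
  shows "\<not> (AE y in unit_lebesgue. remq_limit r y = c)"
proof
  assume ae: "AE y in unit_lebesgue. remq_limit r y = c"
  have "c = (\<integral>y. remq_limit r y \<partial>unit_lebesgue)"
    using ae r unit_lebesgue.prob_space by (subst integral_cong_AE[where g="\<lambda>_. c"]) auto
  then have "AE y in unit_lebesgue. (centred_series r y)\<^sup>2 = 0"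
    using ae by (simp add: integral_remq_limit[OF r] centred_series_def)
  then have "(\<integral>y. (centred_series r y)\<^sup>2 \<partial>unit_lebesgue) = 0"
    using r by (subst integral_cong_AE[where g="\<lambda>_. 0"]) auto
  then show False
    using r by (simp add: integral_centred_series_sq abs_less_iff)
qed

lemma sum_remq_eq:
  assumes "0 < \<bar>r\<bar>" "\<bar>r\<bar> < 1"
  shows "(\<Sum>n\<in>{1..N}. remq r n x) = real N + (\<Sum>n\<in>{1..N}. centred_series r (tent_iter n x))"
  using assms by (simp add: remq_eq_remq_limit centred_series_def sum_subtractf)

lemma remq_average_eq:
  assumes "0 < \<bar>r\<bar>" "\<bar>r\<bar> < 1"
  shows "\<forall>\<^sub>F N in sequentially. \<forall>x. (\<Sum>n\<in>{1..N}. remq r n x) / real N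
      = 1 + (\<Sum>n\<in>{1..N}. centred_series r (tent_iter n x)) / real N"
proof (rule eventually_sequentiallyI[of 1], intro allI)
  fix N :: nat and x
  assume "1 \<le> N"
  then show "(\<Sum>n\<in>{1..N}. remq r n x) / real N = 1 + (\<Sum>n\<in>{1..N}. centred_series r (tent_iter n x)) / real N"
    unfolding sum_remq_eq[OF assms] by (simp add: add_divide_distrib)
qed

lemma abs_centred_series_tent_iter_le:
  "\<bar>r\<bar> < 1 \<Longrightarrow> x \<in> space unit_lebesgue \<Longrightarrow> \<bar>centred_series r (tent_iter n x)\<bar> \<le> 4 / (1 - \<bar>r\<bar>)"
  by (intro abs_centred_series_le tent_iter_in_unit) auto

lemma integrable_remq_average:
  assumes "0 < \<bar>r\<bar>" "\<bar>r\<bar> < 1"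
  shows "integrable unit_lebesgue (\<lambda>x. (\<Sum>n\<in>{1..N}. remq r n x) / real N)"
proof -
  have "integrable unit_lebesgue (\<lambda>x. \<Sum>n\<in>{1..N}. centred_series r (tent_iter n x))"
    using assms(2) abs_centred_series_tent_iter_le[OF assms(2)]
    by (intro unit_lebesgue.integrable_sum_bounded) measurable
  then show ?thesis
    unfolding sum_remq_eq[OF assms] by (simp add: add_divide_distrib)
qed

lemma AE_remq_average_tendsto:
  assumes "0 < \<bar>r\<bar>" "\<bar>r\<bar> < 1"
  shows "AE x in unit_lebesgue. (\<lambda>N. (\<Sum>n\<in>{1..N}. remq r n x) / real N) \<longlonglongrightarrow> 1"
proof -
  have "AE x in unit_lebesgue. (\<lambda>N. (\<Sum>n\<in>{1..N}. centred_series r (tent_iter n x)) / real N) \<longlonglongrightarrow> 0"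
    using _ abs_centred_series_tent_iter_le[OF assms(2)] integral_sum_centred_series_sq_le[OF assms(2)]
    by (rule unit_lebesgue.averages_tendsto_zero_AE) (use assms(2) in measurable)
  then show ?thesis
  proof eventually_elim
    case (elim x)
    have "(\<lambda>N. 1 + (\<Sum>n\<in>{1..N}. centred_series r (tent_iter n x)) / real N) \<longlonglongrightarrow> 1"
      using tendsto_add[OF tendsto_const elim] by simp
    moreover have "\<forall>\<^sub>F N in sequentially.
        1 + (\<Sum>n\<in>{1..N}. centred_series r (tent_iter n x)) / real N = (\<Sum>n\<in>{1..N}. remq r n x) / real N"
      using remq_average_eq[OF assms] by eventually_elim simp
    ultimately show ?case
      by (rule Lim_transform_eventually)
  qed
qed

lemma L1_remq_average_tendsto:
  assumes "0 < \<bar>r\<bar>" "\<bar>r\<bar> < 1"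
  shows "(\<lambda>N. \<integral>x. \<bar>(\<Sum>n\<in>{1..N}. remq r n x) / real N - 1\<bar> \<partial>unit_lebesgue) \<longlonglongrightarrow> 0"
proof -
  have "(\<lambda>N. \<integral>x. \<bar>(\<Sum>n\<in>{1..N}. centred_series r (tent_iter n x)) / real N\<bar> \<partial>unit_lebesgue) \<longlonglongrightarrow> 0"
    using _ abs_centred_series_tent_iter_le[OF assms(2)] integral_sum_centred_series_sq_le[OF assms(2)]
    by (rule unit_lebesgue.averages_tendsto_zero_L1) (use assms(2) in measurable)
  moreover have "\<forall>\<^sub>F N in sequentially.
      (\<integral>x. \<bar>(\<Sum>n\<in>{1..N}. centred_series r (tent_iter n x)) / real N\<bar> \<partial>unit_lebesgue)
      = (\<integral>x. \<bar>(\<Sum>n\<in>{1..N}. remq r n x) / real N - 1\<bar> \<partial>unit_lebesgue)"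
    using remq_average_eq[OF assms] by eventually_elim simp
  ultimately show ?thesis
    by (rule Lim_transform_eventually)
qed

theorem theorem1p7:
  fixes r :: real
  assumes "0 < \<bar>r\<bar>" and "\<bar>r\<bar> < 1"
  shows "(\<exists>L :: real \<Rightarrow> real.
            L \<in> borel_measurable unit_lebesgue
          \<and> \<not> (\<exists>c. AE x in unit_lebesgue. L x = c)
          \<and> integrable unit_lebesgue L
          \<and> integral\<^sup>L unit_lebesgue L = 1
          \<and> weak_conv_m (\<lambda>N. distr unit_lebesgue borel (remq r N))
                        (distr unit_lebesgue borel L))
       \<and> (AE x in unit_lebesgue.
            (\<lambda>N'. (\<Sum>N\<in>{1..N'}. remq r N x) / real N') \<longlonglongrightarrow> 1)
       \<and> (\<forall>N'. integrable unit_lebesgue (\<lambda>x. (\<Sum>N\<in>{1..N'}. remq r N x) / real N'))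
       \<and> ((\<lambda>N'. \<integral>x. \<bar>(\<Sum>N\<in>{1..N'}. remq r N x) / real N' - 1\<bar> \<partial>unit_lebesgue)
            \<longlonglongrightarrow> 0)"
proof (intro conjI exI)
  note r0 = assms(1) and r = assms(2)
  show "remq_limit r \<in> borel_measurable unit_lebesgue"
    using r by measurable
  show "\<not> (\<exists>c. AE x in unit_lebesgue. remq_limit r x = c)"
    using not_AE_eq_const_remq_limit[OF r] by blast
  show "integrable unit_lebesgue (remq_limit r)"
    by (rule integrable_remq_limit[OF r])
  show "integral\<^sup>L unit_lebesgue (remq_limit r) = 1"
    by (rule integral_remq_limit[OF r])
  show "weak_conv_m (\<lambda>N. distr unit_lebesgue borel (remq r N)) (distr unit_lebesgue borel (remq_limit r))"
    using distr_remq[OF r0 r] by (intro weak_conv_m_eventually_const eventually_sequentiallyI) auto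
  show "AE x in unit_lebesgue. (\<lambda>N'. (\<Sum>N\<in>{1..N'}. remq r N x) / real N') \<longlonglongrightarrow> 1"
    by (rule AE_remq_average_tendsto[OF r0 r])
  show "\<forall>N'. integrable unit_lebesgue (\<lambda>x. (\<Sum>N\<in>{1..N'}. remq r N x) / real N')"
    using integrable_remq_average[OF r0 r] by blast
  show "(\<lambda>N'. \<integral>x. \<bar>(\<Sum>N\<in>{1..N'}. remq r N x) / real N' - 1\<bar> \<partial>unit_lebesgue) \<longlonglongrightarrow> 0"
    by (rule L1_remq_average_tendsto[OF r0 r])
qed

end
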